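(* Let $\mathcal X$ be a Banach space, $N\in\mathbb N$, $a>0$, $\delta>0$, $r_l=e^{-2\pi2^{-l}}$, $f\in\mathcal A(\mathcal X)$, $l\in\mathbb N_0$ and $\zeta_x\in\mathbb T$. If $$\sum_{m=1}^\infty2^{-mN\delta}\,2^{m+l}\int_{\mathbb T}\frac{\|f_{m+l}(\zeta_y)\|^\delta_{\mathcal X}}{(1+2^l|\zeta_x-\zeta_y|)^{a\delta}}\,dy<\infty,$$ then $M_lf(\zeta_x)<\infty$, where $$M_lf(\zeta_x)=\sup_{k\in\mathbb N_0}\sup_{\zeta_y\in\mathbb T}\frac{2^{-kN}\|f_{l+k}(\zeta_y)\|_{\mathcal X}}{(1+2^l|\zeta_x-\zeta_y|)^a}.$$
   Context: $\mathbb D$ unit disc, $\mathbb T$ unit circle, $\zeta_x=e^{2\pi ix}$; $dy$ normalized arc length; $|\zeta_x-\zeta_y|$ arc-length distance (distance from $x-y$ to $\mathbb Z$). $\mathcal A(\mathcal X)$: analytic $f:\mathbb D\to\mathcal X$; $f_l(\zeta)=f(r_l\zeta)$. *)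

theory Defs
  imports "HOL-Analysis.Analysis"
begin

text \<open>Complex Banach spaces: a real Banach space with a compatible complex scalar
multiplication (the library only has real vector spaces).\<close>
class complex_banach = banach +
  fixes scaleC :: "complex \<Rightarrow> 'a \<Rightarrow> 'a"
  assumes scaleC_add_left: "scaleC (c + d) x = scaleC c x + scaleC d x"
    and scaleC_add_right: "scaleC c (x + y) = scaleC c x + scaleC c y"
    and scaleC_scaleC: "scaleC c (scaleC d x) = scaleC (c * d) x"
    and scaleC_one: "scaleC 1 x = x"
    and scaleC_of_real: "scaleC (complex_of_real r) x = scaleR r x"
    and norm_scaleC: "norm (scaleC c x) = cmod c * norm x"

definition analytic_disc :: "(complex \<Rightarrow> 'a::complex_banach) \<Rightarrow> bool" where
  "analytic_disc f \<longleftrightarrow>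
     (\<forall>z\<in>ball 0 1. \<exists>D. ((\<lambda>w. scaleC (inverse (w - z)) (f w - f z)) \<longlongrightarrow> D) (at z))"

definition rad :: "nat \<Rightarrow> real" where
  "rad l = exp (- 2 * pi * inverse (2 ^ l))"

definition zeta :: "real \<Rightarrow> complex" where
  "zeta x = cis (2 * pi * x)"

text \<open>|zeta_x - zeta_y| := distance from x - y to the integers\<close>
definition tdist :: "real \<Rightarrow> real \<Rightarrow> real" where
  "tdist x y = \<bar>(x - y) - real_of_int (round (x - y))\<bar>"

definition dil :: "(complex \<Rightarrow> 'a) \<Rightarrow> nat \<Rightarrow> complex \<Rightarrow> 'a" where
  "dil f l z = f (complex_of_real (rad l) * z)"

end

theory Submission
  imports Defs "HOL-Complex_Analysis.Complex_Analysis"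
begin

text \<open>For analytic \<open>g\<close> and every \<open>\<delta> > 0\<close>, \<open>|g|^\<delta>\<close> is subharmonic; in the weak form used
  here, \<open>|g z|^\<delta>\<close> is at most \<open>R / (R - |z|)\<close> times the mean of \<open>|g|^\<delta>\<close> over \<open>|w| = R\<close>
  (Cauchy's formula for \<open>g^\<delta>\<close> when \<open>g\<close> has no zeros; zeros are divided out by Blaschke
  factors, which leave \<open>|g|\<close> unchanged on the circle). A norming functional from Hahn--Banach
  transfers this to \<open>\<mathcal>X\<close>-valued \<open>f\<close>. Between the radii \<open>r (l + k)\<close> and \<open>r (l + k + 1)\<close> the
  constant is at most \<open>e^\<pi> 2^(l + k)\<close>, while the weight \<open>(1 + 2^l |\<zeta>_x - \<zeta>_y|)^(-a\<delta>) \<ge> (1 + 2^l)^(-a\<delta>)\<close>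
  shows that the circle means at \<open>r (l + k + 1)\<close>, multiplied by \<open>2^(-(k+1)N\<delta>) 2^(k+1+l)\<close>, are
  bounded by the sum of the series. So \<open>|f_(l+k)|\<close> grows at most like \<open>2^((k+1)N)\<close>, which
  the factor \<open>2^(-kN)\<close> absorbs.\<close>

section \<open>Hahn--Banach\<close>

definition dominated_graph :: "('a::real_normed_vector \<times> real) set \<Rightarrow> bool" where
  "dominated_graph M \<longleftrightarrow> subspace M \<and> (\<forall>(x, t)\<in>M. t \<le> norm x)"

lemma subspace_Union_chain:
  fixes C :: "'a::real_vector set set"
  assumes "C \<in> chains S" and "\<And>X. X \<in> C \<Longrightarrow> subspace X" and "C \<noteq> {}"
  shows "subspace (\<Union>C)"
  unfolding subspace_def
proof (intro conjI ballI allI)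
  obtain X where "X \<in> C" using assms(3) by blast
  thus "0 \<in> \<Union>C" using assms(2)[of X] by (auto simp: subspace_def)
next
  fix x y assume "x \<in> \<Union>C" "y \<in> \<Union>C"
  then obtain X Y where XY: "X \<in> C" "Y \<in> C" "x \<in> X" "y \<in> Y" by blast
  from chainsD[OF assms(1) XY(1,2)] obtain Z where "Z \<in> C" "X \<subseteq> Z" "Y \<subseteq> Z"
    using XY(1,2) by blast
  thus "x + y \<in> \<Union>C" using assms(2) XY(3,4) by (meson UnionI subsetD subspace_add)
next
  fix c :: real and x assume "x \<in> \<Union>C"
  thus "c *\<^sub>R x \<in> \<Union>C" using assms(2) subspace_scale by blast
qed

lemma dominated_graph_unique:
  assumes "dominated_graph M" and "(x, s) \<in> M" and "(x, t) \<in> M"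
  shows "s = t"
proof -
  have sub: "subspace M" and dom: "\<And>x t. (x, t) \<in> M \<Longrightarrow> t \<le> norm x"
    using assms(1) by (auto simp: dominated_graph_def)
  have "(x, s) - (x, t) \<in> M" "(x, t) - (x, s) \<in> M"
    using subspace_diff[OF sub] assms(2,3) by blast+
  thus ?thesis using dom[of 0 "s - t"] dom[of 0 "t - s"] by simp
qed

lemma dominated_graph_span_insert:
  assumes M: "dominated_graph M"
    and lower: "\<And>y t. (y, t) \<in> M \<Longrightarrow> t - norm (y - x) \<le> c"
    and upper: "\<And>y t. (y, t) \<in> M \<Longrightarrow> c \<le> norm (y + x) - t"
  shows "dominated_graph (span (insert (x, c) M))"
  unfolding dominated_graph_def
proof (intro conjI subspace_span ballI, clarify)
  have sub: "subspace M" and dom: "\<And>x t. (x, t) \<in> M \<Longrightarrow> t \<le> norm x"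
    using M by (auto simp: dominated_graph_def)
  have scl: "(r *\<^sub>R y, r * t) \<in> M" if "(y, t) \<in> M" for r y t
    using subspace_scale[OF sub that, of r] by simp
  fix z s assume "(z, s) \<in> span (insert (x, c) M)"
  then obtain k where "(z, s) - k *\<^sub>R (x, c) \<in> M"
    unfolding span_insert span_eq_iff[THEN iffD2, OF sub] by blast
  then obtain y t where yt: "(y, t) \<in> M" and z: "z = y + k *\<^sub>R x" and s: "s = t + k * c"
    by (intro that[of "z - k *\<^sub>R x" "s - k * c"]) auto
  show "s \<le> norm z"
  proof (cases k "0::real" rule: linorder_cases)
    case equal thus ?thesis using z s dom[OF yt] by simp
  next
    case greater
    have "c \<le> norm ((1/k) *\<^sub>R y + x) - (1/k) * t" using upper[OF scl[OF yt]] .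
    moreover have "k * norm ((1/k) *\<^sub>R y + x) = norm (k *\<^sub>R ((1/k) *\<^sub>R y + x))"
      using greater by simp
    moreover have "k *\<^sub>R ((1/k) *\<^sub>R y + x) = y + k *\<^sub>R x"
      using greater by (simp add: scaleR_add_right)
    ultimately show ?thesis using greater z s by (simp add: field_simps)
  next
    case less
    have "(-1/k) * t - norm ((-1/k) *\<^sub>R y - x) \<le> c" using lower[OF scl[OF yt]] .
    moreover have "-k * norm ((-1/k) *\<^sub>R y - x) = norm ((-k) *\<^sub>R ((-1/k) *\<^sub>R y - x))"
      using less by simp
    moreover have "(-k) *\<^sub>R ((-1/k) *\<^sub>R y - x) = y + k *\<^sub>R x"
      using less by (simp add: scaleR_diff_right)
    ultimately show ?thesis using less z s by (simp add: field_simps)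
  qed
qed

lemma dominated_graph_extension_value:
  assumes M: "dominated_graph M"
  shows "\<exists>c. (\<forall>(y, t)\<in>M. t - norm (y - x) \<le> c \<and> c \<le> norm (y + x) - t)"
proof -
  have sub: "subspace M" and dom: "\<And>x t. (x, t) \<in> M \<Longrightarrow> t \<le> norm x"
    using M by (auto simp: dominated_graph_def)
  have key: "t1 - norm (y1 - x) \<le> norm (y2 + x) - t2"
    if "(y1, t1) \<in> M" "(y2, t2) \<in> M" for y1 t1 y2 t2
  proof -
    have "t1 + t2 \<le> norm (y1 + y2)" using dom subspace_add[OF sub that] by simp
    also have "\<dots> \<le> norm (y1 - x) + norm (y2 + x)"
      using norm_triangle_ineq[of "y1 - x" "y2 + x"] by simp
    finally show ?thesis by simp
  qed
  define S where "S = {t - norm (y - x) | y t. (y, t) \<in> M}"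
  have zero: "(0, 0) \<in> M" using subspace_0[OF sub] by (simp add: zero_prod_def)
  have "S \<noteq> {}" using zero by (auto simp: S_def)
  moreover have "bdd_above S" unfolding bdd_above_def S_def using key zero by fastforce
  ultimately show ?thesis
    by (intro exI[of _ "Sup S"]) (auto simp: S_def intro!: cSup_upper cSup_least key)
qed

lemma dominated_graph_maximal_total:
  assumes M: "dominated_graph M"
    and max: "\<And>X. dominated_graph X \<Longrightarrow> M \<subseteq> X \<Longrightarrow> X = M"
  shows "\<exists>t. (x, t) \<in> M"
proof -
  obtain c where "\<forall>(y, t)\<in>M. t - norm (y - x) \<le> c \<and> c \<le> norm (y + x) - t"
    using dominated_graph_extension_value[OF M] by blast
  hence "dominated_graph (span (insert (x, c) M))"
    by (intro dominated_graph_span_insert[OF M]) auto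
  moreover have "M \<subseteq> span (insert (x, c) M)" by (meson span_superset subset_insertI subset_trans)
  ultimately have "span (insert (x, c) M) = M" by (rule max)
  thus ?thesis using span_base[of "(x, c)" "insert (x, c) M"] by auto
qed

theorem Hahn_Banach_norming_functional:
  fixes v :: "'a::real_normed_vector"
  shows "\<exists>\<psi>::'a \<Rightarrow> real. linear \<psi> \<and> (\<forall>x. \<psi> x \<le> norm x) \<and> \<psi> v = norm v"
proof -
  define A where "A = {M. dominated_graph M \<and> (v, norm v) \<in> M}"
  have "\<exists>M\<in>A. \<forall>X\<in>A. M \<subseteq> X \<longrightarrow> X = M"
  proof (rule Zorn_Lemma2, intro ballI)
    fix C assume C: "C \<in> chains A"
    show "\<exists>U\<in>A. \<forall>X\<in>C. X \<subseteq> U"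
    proof (cases "C = {}")
      case True
      have "\<forall>(x, t)\<in>span {(v, norm v)}. t \<le> norm x"
        unfolding span_singleton by (auto intro: mult_right_mono abs_ge_self[THEN order_trans])
      hence "span {(v, norm v)} \<in> A"
        by (auto simp: A_def dominated_graph_def span_base)
      thus ?thesis using True by blast
    next
      case False
      have "\<Union>C \<in> A" using subspace_Union_chain[OF C] chainsD2[OF C] False
        by (fastforce simp: A_def dominated_graph_def)
      thus ?thesis by blast
    qed
  qed
  then obtain M where M: "dominated_graph M" and vM: "(v, norm v) \<in> M"
    and max: "\<And>X. dominated_graph X \<Longrightarrow> M \<subseteq> X \<Longrightarrow> X = M"
    unfolding A_def by blast
  define \<psi> where "\<psi> x = (SOME t. (x, t) \<in> M)" for x
  have \<psi>M: "(x, \<psi> x) \<in> M" for x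
    unfolding \<psi>_def using dominated_graph_maximal_total[OF M max] by (rule someI_ex)
  have \<psi>eq: "\<psi> x = t" if "(x, t) \<in> M" for x t using dominated_graph_unique[OF M \<psi>M that] .
  have sub: "subspace M" using M by (simp add: dominated_graph_def)
  have "linear \<psi>"
    using subspace_add[OF sub \<psi>M \<psi>M] subspace_scale[OF sub \<psi>M]
    by (intro linearI) (auto intro!: \<psi>eq)
  moreover have "\<forall>x. \<psi> x \<le> norm x" using M \<psi>M by (auto simp: dominated_graph_def)
  moreover have "\<psi> v = norm v" using \<psi>eq[OF vM] .
  ultimately show ?thesis by blast
qed

lemma scaleC_decomp: "scaleC c (x::'a::complex_banach) = Re c *\<^sub>R x + Im c *\<^sub>R scaleC \<i> x"
proof -
  have "c = complex_of_real (Re c) + complex_of_real (Im c) * \<i>" by (simp add: complex_eq_iff)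
  hence "scaleC c x = scaleC (complex_of_real (Re c)) x + scaleC (complex_of_real (Im c)) (scaleC \<i> x)"
    by (metis scaleC_add_left scaleC_scaleC)
  thus ?thesis by (simp add: scaleC_of_real)
qed

lemma scaleC_ii: "scaleC \<i> (scaleC \<i> x) = - (x::'a::complex_banach)"
  using scaleC_of_real[of "-1" x] by (simp add: scaleC_scaleC)

text \<open>Complex Hahn--Banach: \<open>\<phi> x = \<psi> x - \<i> \<psi> (\<i> x)\<close> for a real norming functional \<open>\<psi>\<close>.\<close>
theorem complex_norming_functional:
  fixes v :: "'a::complex_banach"
  obtains \<phi> :: "'a \<Rightarrow> complex"
  where "\<And>x y. \<phi> (x + y) = \<phi> x + \<phi> y" "\<And>c x. \<phi> (scaleC c x) = c * \<phi> x"
    "\<And>x. norm (\<phi> x) \<le> norm x" "\<phi> v = of_real (norm v)"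
proof -
  obtain \<psi> :: "'a \<Rightarrow> real" where lin: "linear \<psi>" and dom: "\<And>x. \<psi> x \<le> norm x" and \<psi>v: "\<psi> v = norm v"
    using Hahn_Banach_norming_functional[of v] by blast
  define \<phi> where "\<phi> x = complex_of_real (\<psi> x) - \<i> * complex_of_real (\<psi> (scaleC \<i> x))" for x
  have add: "\<phi> (x + y) = \<phi> x + \<phi> y" for x y
    unfolding \<phi>_def by (simp add: scaleC_add_right linear_add[OF lin] algebra_simps)
  have scR: "\<phi> (r *\<^sub>R x) = complex_of_real r * \<phi> x" for r x
  proof -
    have "scaleC \<i> (r *\<^sub>R x) = r *\<^sub>R scaleC \<i> x"
      by (metis scaleC_of_real scaleC_scaleC mult.commute)
    thus ?thesis unfolding \<phi>_def by (simp add: linear_scale[OF lin] algebra_simps)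
  qed
  have sci: "\<phi> (scaleC \<i> x) = \<i> * \<phi> x" for x
    unfolding \<phi>_def by (simp add: scaleC_ii linear_neg[OF lin] algebra_simps)
  have scC: "\<phi> (scaleC c x) = c * \<phi> x" for c x
  proof -
    have "\<phi> (scaleC c x) = (complex_of_real (Re c) + complex_of_real (Im c) * \<i>) * \<phi> x"
      unfolding scaleC_decomp[of c x] add scR sci by (simp add: algebra_simps)
    also have "complex_of_real (Re c) + complex_of_real (Im c) * \<i> = c" by (simp add: complex_eq_iff)
    finally show ?thesis .
  qed
  have Re\<phi>: "Re (\<phi> x) = \<psi> x" for x by (simp add: \<phi>_def)
  have nrm: "norm (\<phi> x) \<le> norm x" for x
  proof (cases "\<phi> x = 0")
    case False
    define w where "w = cnj (\<phi> x) / complex_of_real (norm (\<phi> x))"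
    have "w * \<phi> x = complex_of_real (norm (\<phi> x))"
      using False complex_norm_square[of "\<phi> x"] by (simp add: w_def power2_eq_square field_simps)
    hence "norm (\<phi> x) = \<psi> (scaleC w x)" using Re\<phi>[of "scaleC w x"] scC[of w x] by simp
    also have "\<dots> \<le> norm (scaleC w x)" by (rule dom)
    also have "\<dots> = norm x" using False by (simp add: norm_scaleC w_def norm_divide)
    finally show ?thesis .
  qed simp
  have "(Re (\<phi> v))\<^sup>2 + (Im (\<phi> v))\<^sup>2 \<le> (norm v)\<^sup>2"
    using nrm[of v] by (simp add: cmod_power2[symmetric] power_mono)
  hence "\<phi> v = of_real (norm v)" using Re\<phi>[of v] \<psi>v by (simp add: complex_eq_iff)
  with add scC nrm show thesis by (rule that)
qed

section \<open>Vector-valued analytic functions on the disc\<close>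

lemma analytic_disc_isCont:
  fixes f :: "complex \<Rightarrow> 'a::complex_banach"
  assumes "analytic_disc f" and "z \<in> ball 0 1"
  shows "isCont f z"
proof -
  obtain D where D: "((\<lambda>w. scaleC (inverse (w - z)) (f w - f z)) \<longlongrightarrow> D) (at z)"
    using assms unfolding analytic_disc_def by blast
  have "((\<lambda>w. norm (w - z) * norm (scaleC (inverse (w - z)) (f w - f z))) \<longlongrightarrow> 0 * norm D) (at z)"
    by (intro tendsto_intros D) (auto intro!: tendsto_eq_intros)
  moreover have "\<forall>\<^sub>F w in at z. norm (w - z) * norm (scaleC (inverse (w - z)) (f w - f z)) = norm (f w - f z)"
    by (rule eventually_mono[OF eventually_neq_at_within[of z z UNIV]])
       (simp add: norm_scaleC[symmetric] scaleC_scaleC scaleC_one flip: norm_scaleC)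
  ultimately have "((\<lambda>w. norm (f w - f z)) \<longlongrightarrow> 0) (at z)"
    using tendsto_cong by fastforce
  thus ?thesis by (simp add: isCont_def tendsto_norm_zero_iff LIM_zero_cancel)
qed

lemma continuous_on_analytic_disc:
  "analytic_disc f \<Longrightarrow> continuous_on (ball 0 1) f"
  by (simp add: analytic_disc_isCont continuous_at_imp_continuous_on)

lemma holomorphic_on_functional_comp_analytic_disc:
  fixes f :: "complex \<Rightarrow> 'a::complex_banach" and \<phi> :: "'a \<Rightarrow> complex"
  assumes an: "analytic_disc f"
    and add: "\<And>x y. \<phi> (x + y) = \<phi> x + \<phi> y" and scC: "\<And>c x. \<phi> (scaleC c x) = c * \<phi> x"
    and nrm: "\<And>x. norm (\<phi> x) \<le> norm x"
  shows "(\<lambda>w. \<phi> (f w)) holomorphic_on ball 0 1"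
proof -
  have bl: "bounded_linear \<phi>"
  proof
    show "\<phi> (x + y) = \<phi> x + \<phi> y" for x y by (rule add)
    show "\<phi> (r *\<^sub>R x) = r *\<^sub>R \<phi> x" for r x
      using scC[of "complex_of_real r" x] by (simp add: scaleC_of_real scaleR_conv_of_real)
    show "\<exists>K. \<forall>x. norm (\<phi> x) \<le> norm x * K" using nrm by (intro exI[of _ 1]) simp
  qed
  show ?thesis unfolding holomorphic_on_open[OF open_ball]
  proof
    fix z :: complex assume z: "z \<in> ball 0 1"
    obtain D where D: "((\<lambda>w. scaleC (inverse (w - z)) (f w - f z)) \<longlongrightarrow> D) (at z)"
      using an z unfolding analytic_disc_def by blast
    have "((\<lambda>w. \<phi> (scaleC (inverse (w - z)) (f w - f z))) \<longlongrightarrow> \<phi> D) (at z)"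
      by (rule bounded_linear.tendsto[OF bl D])
    moreover have "\<forall>\<^sub>F w in at z. \<phi> (scaleC (inverse (w - z)) (f w - f z)) = (\<phi> (f w) - \<phi> (f z)) / (w - z)"
      by (rule eventually_mono[OF eventually_neq_at_within[of z z UNIV]])
         (simp add: scC linear_diff[OF bounded_linear.linear[OF bl]] divide_inverse mult.commute)
    ultimately have "((\<lambda>w. (\<phi> (f w) - \<phi> (f z)) / (w - z)) \<longlongrightarrow> \<phi> D) (at z)"
      using tendsto_cong by fastforce
    thus "\<exists>f'. ((\<lambda>w. \<phi> (f w)) has_field_derivative f') (at z)"
      by (auto simp: has_field_derivative_iff)
  qed
qed

section \<open>Subharmonicity of \<open>|g|^\<delta>\<close>\<close>

definition circle_mean :: "(complex \<Rightarrow> 'a::real_normed_vector) \<Rightarrow> real \<Rightarrow> real \<Rightarrow> real" where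
  "circle_mean g R \<delta> = integral {0..1} (\<lambda>t. norm (g (of_real R * zeta t)) powr \<delta>)"

lemma zeta_conv_exp: "zeta t = exp (2 * of_real pi * \<i> * of_real t)"
  unfolding zeta_def cis_conv_exp by (simp add: mult_ac)

lemma norm_zeta [simp]: "norm (zeta t) = 1"
  by (simp add: zeta_def)

lemma continuous_on_zeta [continuous_intros]:
  "continuous_on S g \<Longrightarrow> continuous_on S (\<lambda>x. zeta (g x))"
  unfolding zeta_conv_exp by (intro continuous_intros)

lemma continuous_on_powr_norm_circle:
  fixes g :: "complex \<Rightarrow> 'a::real_normed_vector"
  assumes "continuous_on (cball 0 R) g" and "\<delta> > 0" and "U \<subseteq> {0..R}"
  shows "continuous_on (U \<times> {0..1}) (\<lambda>(\<rho>, t). norm (g (of_real \<rho> * zeta t)) powr \<delta>)"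
proof -
  have "continuous_on (U \<times> {0..1}) (\<lambda>p. of_real (fst p) * zeta (snd p))"
    by (intro continuous_intros)
  moreover have "(\<lambda>p. of_real (fst p) * zeta (snd p)) ` (U \<times> {0..1}) \<subseteq> cball 0 R"
    using assms(3) by (auto simp: norm_mult)
  ultimately have "continuous_on (U \<times> {0..1}) (\<lambda>p. g (of_real (fst p) * zeta (snd p)))"
    using continuous_on_compose2[OF assms(1)] by blast
  hence "continuous_on (U \<times> {0..1}) (\<lambda>p. norm (g (of_real (fst p) * zeta (snd p))) powr \<delta>)"
    using assms(2) by (intro continuous_on_powr') (auto intro: continuous_intros)
  thus ?thesis by (simp add: case_prod_beta)
qed

lemma continuous_on_powr_norm_circle_param:
  fixes g :: "complex \<Rightarrow> 'a::real_normed_vector"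
  assumes "continuous_on (cball 0 R) g" and "\<delta> > 0" and "0 \<le> R"
  shows "continuous_on {0..1} (\<lambda>t. norm (g (of_real R * zeta t)) powr \<delta>)"
proof -
  have "continuous_on {0..1} (\<lambda>t. g (of_real R * zeta t))"
    by (rule continuous_on_compose2[OF assms(1)])
       (use assms(3) in \<open>auto intro!: continuous_intros simp: norm_mult\<close>)
  thus ?thesis using assms(2) by (intro continuous_on_powr') (auto intro: continuous_intros)
qed

lemma continuous_on_circle_mean:
  fixes g :: "complex \<Rightarrow> 'a::real_normed_vector"
  assumes "continuous_on (cball 0 R) g" and "\<delta> > 0" and "0 \<le> c"
  shows "continuous_on {c..R} (\<lambda>\<rho>. circle_mean g \<rho> \<delta>)"
  unfolding circle_mean_def cbox_interval[symmetric]
  by (rule integral_continuous_on_param)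
     (use continuous_on_powr_norm_circle[OF assms(1,2), of "{c..R}"] assms(3) in
       \<open>auto simp: cbox_interval\<close>)

text \<open>Cauchy's formula on \<open>|w| = \<rho>\<close> with the kernel bound \<open>|\<rho> \<zeta> - z| \<ge> \<rho> - |z|\<close>.\<close>
lemma norm_le_circle_mean:
  fixes h :: "complex \<Rightarrow> complex"
  assumes hol: "h holomorphic_on cball 0 \<rho>" and z: "norm z < \<rho>"
  shows "norm (h z) \<le> \<rho> / (\<rho> - norm z) * circle_mean h \<rho> 1"
proof -
  have \<rho>: "\<rho> > 0" using z norm_ge_zero[of z] by linarith
  have "((\<lambda>u. h u / (u - z)) has_contour_integral (2 * of_real pi * \<i> * h z)) (circlepath 0 \<rho>)"
    using Cauchy_integral_circlepath_simple[OF hol] z by simp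
  define F where "F x = h (of_real \<rho> * zeta x) / (of_real \<rho> * zeta x - z) * (2 * pi * \<i> * \<rho> * zeta x)" for x
  have "(F has_integral (2 * of_real pi * \<i> * h z)) {0..1}"
    using \<open>(_ has_contour_integral _) _\<close> unfolding has_contour_integral_def
    apply (rule has_integral_spike_eq[where S="{}", THEN iffD1, rotated 2])
    by (auto simp: F_def vector_derivative_circlepath01 simp del: exp_of_real)
       (auto simp: circlepath zeta_conv_exp)
  hence intF: "F integrable_on {0..1}" and eqF: "integral {0..1} F = 2 * of_real pi * \<i> * h z"
    by (auto simp: integrable_on_def integral_unique)
  have contH: "continuous_on {0..1} (\<lambda>t. norm (h (of_real \<rho> * zeta t)) powr 1)"
    using \<rho> by (intro continuous_on_powr_norm_circle_param holomorphic_on_imp_continuous_on[OF hol]) auto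
  define G where "G t = 2 * pi * \<rho> / (\<rho> - norm z) * norm (h (of_real \<rho> * zeta t)) powr 1" for t
  have intG: "G integrable_on {0..1}"
    unfolding G_def by (intro integrable_continuous_real continuous_intros contH)
  have "norm (F x) \<le> G x" for x
  proof -
    have d: "\<rho> - norm z \<le> norm (of_real \<rho> * zeta x - z)"
      using norm_triangle_ineq2[of "of_real \<rho> * zeta x" z] \<rho> by (simp add: norm_mult)
    have "norm (F x) = norm (h (of_real \<rho> * zeta x)) * (2 * pi * \<rho>) / norm (of_real \<rho> * zeta x - z)"
      using \<rho> by (simp add: F_def norm_mult norm_divide)
    also have "\<dots> \<le> norm (h (of_real \<rho> * zeta x)) * (2 * pi * \<rho>) / (\<rho> - norm z)"
      using \<rho> z d by (intro divide_left_mono mult_pos_pos) auto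
    finally show ?thesis by (simp add: G_def field_simps)
  qed
  hence "norm (integral {0..1} F) \<le> integral {0..1} G"
    by (rule integral_norm_bound_integral[OF intF intG])
  hence "2 * pi * norm (h z) \<le> 2 * pi * (\<rho> / (\<rho> - norm z) * circle_mean h \<rho> 1)"
    unfolding eqF G_def circle_mean_def by (simp add: norm_mult)
  thus ?thesis by (rule mult_left_le_imp_le) simp
qed

text \<open>Without zeros, \<open>|g|\<^sup>\<delta> = |exp (\<delta> log g)|\<close> is the modulus of a holomorphic function; the
  estimate is proved on circles of radius \<open>\<rho> < R\<close> and passed to the limit \<open>\<rho> \<rightarrow> R\<close>.\<close>
lemma powr_norm_le_circle_mean_zero_free:
  fixes g :: "complex \<Rightarrow> complex"
  assumes hol: "g holomorphic_on ball 0 R1" and "R < R1"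
    and nz: "\<And>w. w \<in> ball 0 R \<Longrightarrow> g w \<noteq> 0" and z: "norm z < R" and \<delta>: "\<delta> > 0"
  shows "norm (g z) powr \<delta> \<le> R / (R - norm z) * circle_mean g R \<delta>"
proof -
  have "g holomorphic_on ball 0 R"
    using hol \<open>R < R1\<close> by (auto intro: holomorphic_on_subset)
  from contractible_imp_holomorphic_log[OF this convex_imp_contractible[OF convex_ball] nz]
  obtain L where L: "L holomorphic_on ball 0 R" "\<And>w. w \<in> ball 0 R \<Longrightarrow> g w = exp (L w)"
    by blast
  define h where "h w = exp (of_real \<delta> * L w)" for w
  have holh: "h holomorphic_on ball 0 R" unfolding h_def using L(1) by (intro holomorphic_intros)
  have nh: "norm (h w) = norm (g w) powr \<delta>" if "w \<in> ball 0 R" for w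
    using L(2)[OF that] by (simp add: h_def powr_def)
  define c where "c = (norm z + R) / 2"
  have cz: "norm z < c" "c < R" "0 \<le> c"
    using z unfolding c_def by simp_all (use norm_ge_zero[of z] in linarith)
  define \<Phi> where "\<Phi> \<rho> = \<rho> / (\<rho> - norm z) * circle_mean g \<rho> \<delta>" for \<rho>
  have "continuous_on (cball 0 R) g"
    using holomorphic_on_imp_continuous_on[OF hol] \<open>R < R1\<close> by (auto intro: continuous_on_subset)
  hence "continuous_on {c..R} \<Phi>"
    unfolding \<Phi>_def using continuous_on_circle_mean[OF _ \<delta> cz(3)] cz
    by (intro continuous_intros) auto
  hence "(\<Phi> \<longlongrightarrow> \<Phi> R) (at R within {c..R})"
    using cz by (auto simp: continuous_on_def)
  hence "(\<Phi> \<longlongrightarrow> \<Phi> R) (at_left R)"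
    using cz by (simp add: at_within_Icc_at_left)
  moreover have "\<forall>\<^sub>F \<rho> in at_left R. norm (g z) powr \<delta> \<le> \<Phi> \<rho>"
    using eventually_at_left_real[OF cz(2)]
  proof (rule eventually_mono)
    fix \<rho> assume \<rho>: "\<rho> \<in> {c<..<R}"
    have circ: "of_real \<rho> * zeta t \<in> ball 0 R" for t
      using \<rho> cz by (simp add: norm_mult)
    have "norm (g z) powr \<delta> = norm (h z)" using nh z by simp
    also have "\<dots> \<le> \<rho> / (\<rho> - norm z) * circle_mean h \<rho> 1"
      using \<rho> cz by (intro norm_le_circle_mean holomorphic_on_subset[OF holh]) auto
    also have "circle_mean h \<rho> 1 = circle_mean g \<rho> \<delta>"
      unfolding circle_mean_def using circ by (intro integral_cong) (simp add: nh)
    finally show "norm (g z) powr \<delta> \<le> \<Phi> \<rho>" unfolding \<Phi>_def .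
  qed
  ultimately have "norm (g z) powr \<delta> \<le> \<Phi> R"
    by (rule tendsto_lowerbound) simp
  thus ?thesis unfolding \<Phi>_def .
qed

lemma norm_Blaschke_numerator_ge:
  fixes a w :: complex
  assumes "norm w \<le> R" and "norm a \<le> R" and "R \<ge> 0"
  shows "R * norm (w - a) \<le> norm (of_real (R\<^sup>2) - cnj a * w)"
proof -
  have id: "(norm (of_real (R\<^sup>2) - cnj a * w))\<^sup>2 - (R * norm (w - a))\<^sup>2
        = (R\<^sup>2 - (norm a)\<^sup>2) * (R\<^sup>2 - (norm w)\<^sup>2)"
    unfolding power_mult_distrib cmod_power2 by (simp add: power2_eq_square algebra_simps)
  have "(norm a)\<^sup>2 \<le> R\<^sup>2" "(norm w)\<^sup>2 \<le> R\<^sup>2"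
    using assms by (auto intro: power_mono)
  hence "(R * norm (w - a))\<^sup>2 \<le> (norm (of_real (R\<^sup>2) - cnj a * w))\<^sup>2"
    using id by (smt (verit) mult_nonneg_nonneg)
  thus ?thesis by (rule power2_le_imp_le) simp
qed

lemma norm_Blaschke_numerator_eq:
  fixes a w :: complex
  assumes "norm w = R"
  shows "norm (of_real (R\<^sup>2) - cnj a * w) = R * norm (w - a)"
proof -
  have "of_real (R\<^sup>2) = w * cnj w" using complex_norm_square[of w] assms by simp
  hence "of_real (R\<^sup>2) - cnj a * w = w * cnj (w - a)" by (simp add: algebra_simps)
  thus ?thesis using assms by (simp only: norm_mult complex_mod_cnj)
qed

lemma holomorphic_divide_zero:
  fixes g :: "complex \<Rightarrow> complex"
  assumes hol: "g holomorphic_on S" and S: "open S" "connected S"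
    and a: "a \<in> S" "g a = 0" and nonzero: "\<exists>w\<in>S. g w \<noteq> 0"
  obtains m g1 where "0 < m" "g1 holomorphic_on S" "g1 a \<noteq> 0"
    "\<And>w. w \<in> S \<Longrightarrow> g w = (w - a) ^ m * g1 w"
proof -
  have nonconst: "\<not> g constant_on S"
    using nonzero a unfolding constant_on_def by metis
  obtain h r m where hrm: "0 < m" "0 < r" "ball a r \<subseteq> S" "h holomorphic_on ball a r"
      "\<And>w. w \<in> ball a r \<Longrightarrow> g w = (w - a)^m * h w" "\<And>w. w \<in> ball a r \<Longrightarrow> h w \<noteq> 0"
    using holomorphic_factor_zero_nonconstant[OF hol S a nonconst] by metis
  define g1 where "g1 w = (if w = a then h a else g w / (w - a) ^ m)" for w
  have "g1 holomorphic_on ball a r"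
    by (rule holomorphic_transform[OF hrm(4)]) (use hrm(5) in \<open>simp add: g1_def\<close>)
  moreover have "g1 holomorphic_on (S - {a})"
    by (rule holomorphic_transform[where f="\<lambda>w. g w / (w - a) ^ m"])
       (use hol in \<open>auto simp: g1_def intro!: holomorphic_intros elim: holomorphic_on_subset\<close>)
  ultimately have "g1 holomorphic_on (ball a r \<union> (S - {a}))"
    by (intro holomorphic_on_Un) (auto intro: open_Diff S(1))
  moreover have "ball a r \<union> (S - {a}) = S" using hrm(2,3) by auto
  moreover have "g w = (w - a) ^ m * g1 w" if "w \<in> S" for w
    using a(2) hrm(1) by (cases "w = a") (simp_all add: g1_def)
  ultimately show thesis using hrm(1,2,6) by (intro that[of m g1]) (auto simp: g1_def)
qed

lemma Blaschke_numerator_nonzero: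
  fixes a w :: complex
  assumes "norm a < R" and "norm w \<le> R"
  shows "of_real (R\<^sup>2) - cnj a * w \<noteq> 0"
proof -
  have "0 < R" using assms(1) norm_ge_zero[of a] by linarith
  have "norm a * norm w \<le> norm a * R" using assms(2) by (simp add: mult_left_mono)
  also have "\<dots> < R * R" using assms(1) \<open>0 < R\<close> by (simp add: mult_strict_right_mono)
  finally have "norm (cnj a * w) < norm (of_real (R\<^sup>2) :: complex)"
    by (simp add: norm_mult power2_eq_square)
  thus ?thesis by auto
qed

text \<open>Replacing the factor \<open>(w - a)\<^sup>m\<close> of \<open>g\<close> by \<open>((R\<^sup>2 - cnj a w) / R)\<^sup>m\<close> divides \<open>g\<close> by a
  Blaschke factor.\<close>
lemma Blaschke_divide_zero:
  fixes g :: "complex \<Rightarrow> complex"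
  assumes hol: "g holomorphic_on ball 0 R1" and "R < R1" and "0 < R"
    and a: "a \<in> ball 0 R" "g a = 0" and nonzero: "\<exists>w\<in>ball 0 R1. g w \<noteq> 0"
  obtains g2 where "g2 holomorphic_on ball 0 R1" "g2 a \<noteq> 0"
    "{w\<in>ball 0 R. g2 w = 0} = {w\<in>ball 0 R. g w = 0} - {a}"
    "\<And>w. norm w = R \<Longrightarrow> norm (g2 w) = norm (g w)"
    "\<And>z. norm z < R \<Longrightarrow> norm (g z) \<le> norm (g2 z)"
proof -
  have aS: "a \<in> ball 0 R1" using a \<open>R < R1\<close> by auto
  obtain m g1 where g1: "0 < m" "g1 holomorphic_on ball 0 R1" "g1 a \<noteq> 0"
    "\<And>w. w \<in> ball 0 R1 \<Longrightarrow> g w = (w - a) ^ m * g1 w"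
    using holomorphic_divide_zero[OF hol open_ball connected_ball aS a(2) nonzero] by blast
  define c where "c w = (of_real (R\<^sup>2) - cnj a * w) / of_real R" for w
  define g2 where "g2 w = g1 w * c w ^ m" for w
  have cnz: "c w \<noteq> 0" if "norm w \<le> R" for w
    using Blaschke_numerator_nonzero[of a R w] a(1) that \<open>0 < R\<close> by (simp add: c_def)
  have in_R1: "w \<in> ball 0 R1" if "norm w \<le> R" for w :: complex using that \<open>R < R1\<close> by simp
  have g2a: "g2 a \<noteq> 0" using g1(3) cnz[of a] a(1) by (simp add: g2_def)
  have zeros: "g2 w = 0 \<longleftrightarrow> g w = 0" if "w \<in> ball 0 R" "w \<noteq> a" for w
    using g1(4)[OF in_R1] cnz[of w] that by (simp add: g2_def)
  show thesis
  proof
    show "g2 holomorphic_on ball 0 R1"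
      unfolding g2_def c_def using \<open>0 < R\<close> by (intro holomorphic_intros g1(2)) auto
    show "g2 a \<noteq> 0" by (rule g2a)
    show "{w\<in>ball 0 R. g2 w = 0} = {w\<in>ball 0 R. g w = 0} - {a}"
      using g2a zeros by blast
  next
    fix w :: complex assume w: "norm w = R"
    have "norm (c w) = norm (w - a)"
      using norm_Blaschke_numerator_eq[OF w, of a] \<open>0 < R\<close> by (simp add: c_def norm_divide)
    thus "norm (g2 w) = norm (g w)"
      using g1(4)[OF in_R1] w by (simp add: g2_def norm_mult norm_power)
  next
    fix z :: complex assume z: "norm z < R"
    have "R * norm (z - a) \<le> norm (of_real (R\<^sup>2) - cnj a * z)"
      using norm_Blaschke_numerator_ge[of z R a] z a(1) \<open>0 < R\<close> by simp
    hence "norm (z - a) ^ m \<le> norm (c z) ^ m"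
      using \<open>0 < R\<close> by (intro power_mono) (simp_all add: c_def norm_divide field_simps)
    thus "norm (g z) \<le> norm (g2 z)"
      using g1(4)[OF in_R1] z
      by (simp add: g2_def norm_mult norm_power mult.commute mult_left_mono)
  qed
qed

lemma powr_norm_le_circle_mean_finite_zeros:
  fixes g :: "complex \<Rightarrow> complex"
  assumes "R < R1" and "0 < R" and "\<delta> > 0"
  shows "g holomorphic_on ball 0 R1 \<Longrightarrow> finite {w\<in>ball 0 R. g w = 0} \<Longrightarrow>
    card {w\<in>ball 0 R. g w = 0} = n \<Longrightarrow> \<exists>w\<in>ball 0 R1. g w \<noteq> 0 \<Longrightarrow> norm z < R \<Longrightarrow>
    norm (g z) powr \<delta> \<le> R / (R - norm z) * circle_mean g R \<delta>"
proof (induction n arbitrary: g)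
  case 0
  hence "\<And>w. w \<in> ball 0 R \<Longrightarrow> g w \<noteq> 0" by auto
  thus ?case by (rule powr_norm_le_circle_mean_zero_free[OF "0.prems"(1) assms(1) _ "0.prems"(5) assms(3)])
next
  case (Suc n)
  hence "{w\<in>ball 0 R. g w = 0} \<noteq> {}" by (metis card.empty nat.distinct(1))
  then obtain a where a: "a \<in> ball 0 R" "g a = 0" by blast
  obtain g1 where g1: "g1 holomorphic_on ball 0 R1" "g1 a \<noteq> 0"
    "{w\<in>ball 0 R. g1 w = 0} = {w\<in>ball 0 R. g w = 0} - {a}"
    "\<And>w. norm w = R \<Longrightarrow> norm (g1 w) = norm (g w)"
    "\<And>z. norm z < R \<Longrightarrow> norm (g z) \<le> norm (g1 z)"
    using Blaschke_divide_zero[OF Suc.prems(1) assms(1,2) a Suc.prems(4)] by blast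
  have "norm (g z) powr \<delta> \<le> norm (g1 z) powr \<delta>"
    using g1(5) Suc.prems(5) assms(3) by (simp add: powr_mono2)
  also have "\<dots> \<le> R / (R - norm z) * circle_mean g1 R \<delta>"
  proof (rule Suc.IH[OF g1(1)])
    show "finite {w\<in>ball 0 R. g1 w = 0}" "card {w\<in>ball 0 R. g1 w = 0} = n"
      using Suc.prems(2,3) a unfolding g1(3) by simp_all
    show "\<exists>w\<in>ball 0 R1. g1 w \<noteq> 0" using g1(2) a(1) assms(1) by auto
  qed (rule Suc.prems(5))
  also have "circle_mean g1 R \<delta> = circle_mean g R \<delta>"
    unfolding circle_mean_def using \<open>0 < R\<close> by (intro integral_cong) (simp add: g1(4) norm_mult)
  finally show ?case .
qed

theorem powr_norm_le_circle_mean: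
  fixes g :: "complex \<Rightarrow> complex"
  assumes hol: "g holomorphic_on ball 0 1" and "0 < R" "R < 1" and z: "norm z < R" and "\<delta> > 0"
  shows "norm (g z) powr \<delta> \<le> R / (R - norm z) * circle_mean g R \<delta>"
proof (cases "\<exists>w\<in>ball 0 1. g w \<noteq> 0")
  case False
  hence "g z = 0" "\<And>t. g (of_real R * zeta t) = 0" using z assms(2,3) by (auto simp: norm_mult)
  thus ?thesis by (simp add: circle_mean_def)
next
  case True
  define Z where "Z = {w\<in>ball 0 R. g w = 0}"
  have "finite Z"
  proof (rule ccontr)
    assume "infinite Z"
    moreover have "Z \<subseteq> cball 0 R" by (auto simp: Z_def)
    ultimately obtain x where x: "x \<in> cball 0 R" "x islimpt Z"
      using compact_eq_Bolzano_Weierstrass[of "cball (0::complex) R"] by auto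
    have "g w = 0" if "w \<in> ball 0 1" for w
      by (rule analytic_continuation[OF hol open_ball connected_ball _ _ x(2)])
         (use x(1) assms(2,3) that in \<open>auto simp: Z_def\<close>)
    thus False using True by blast
  qed
  thus ?thesis
    using powr_norm_le_circle_mean_finite_zeros[OF assms(3,2,5) hol _ refl True z]
    unfolding Z_def by blast
qed

theorem powr_norm_le_circle_mean_analytic_disc:
  fixes f :: "complex \<Rightarrow> 'a::complex_banach"
  assumes an: "analytic_disc f" and R: "0 < R" "R < 1" and z: "norm z < R" and \<delta>: "\<delta> > 0"
  shows "norm (f z) powr \<delta> \<le> R / (R - norm z) * circle_mean f R \<delta>"
proof -
  obtain \<phi> :: "'a \<Rightarrow> complex" where add: "\<And>x y. \<phi> (x + y) = \<phi> x + \<phi> y"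
    and scC: "\<And>c x. \<phi> (scaleC c x) = c * \<phi> x" and nrm: "\<And>x. norm (\<phi> x) \<le> norm x"
    and \<phi>fz: "\<phi> (f z) = of_real (norm (f z))"
    using complex_norming_functional[of "f z"] by blast
  have hol: "(\<lambda>w. \<phi> (f w)) holomorphic_on ball 0 1"
    by (rule holomorphic_on_functional_comp_analytic_disc[OF an add scC nrm])
  have cont: "continuous_on (cball 0 R) F" if "continuous_on (ball 0 1) F" for F :: "complex \<Rightarrow> 'b::real_normed_vector"
    using that R by (auto intro: continuous_on_subset)
  have "norm (f z) powr \<delta> = norm (\<phi> (f z)) powr \<delta>" using \<phi>fz by simp
  also have "\<dots> \<le> R / (R - norm z) * circle_mean (\<lambda>w. \<phi> (f w)) R \<delta>"
    by (rule powr_norm_le_circle_mean[OF hol R z \<delta>])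
  also have "\<dots> \<le> R / (R - norm z) * circle_mean f R \<delta>"
  proof (rule mult_left_mono)
    show "circle_mean (\<lambda>w. \<phi> (f w)) R \<delta> \<le> circle_mean f R \<delta>"
      unfolding circle_mean_def using R \<delta> nrm
      by (intro integral_le integrable_continuous_real continuous_on_powr_norm_circle_param cont
            holomorphic_on_imp_continuous_on[OF hol] continuous_on_analytic_disc[OF an])
         (auto intro: powr_mono2)
  qed (use R z in simp)
  finally show ?thesis .
qed

section \<open>The dyadic estimate\<close>

lemma rad_gt_0: "0 < rad j"
  and rad_less_1: "rad j < 1"
  and rad_less_rad_Suc: "rad j < rad (Suc j)"
  unfolding rad_def by auto

text \<open>With \<open>u = \<pi> / 2^j\<close> one has \<open>rad (j + 1) = e^(-u)\<close>, \<open>rad j = e^(-2u)\<close>, and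
  \<open>1 - e^(-u) \<ge> u e^(-u)\<close>.\<close>
lemma rad_Suc_div_diff_le: "rad (Suc j) / (rad (Suc j) - rad j) \<le> exp pi * 2 ^ j"
proof -
  define u where "u = pi / 2 ^ j"
  have u: "0 < u" "u \<le> pi" unfolding u_def by (auto simp: field_simps)
  have R: "rad (Suc j) = exp (- u)" unfolding rad_def u_def by (simp add: field_simps)
  have r: "rad j = exp (- u) * exp (- u)" unfolding rad_def u_def by (simp add: field_simps mult_exp_exp)
  have "1 + u \<le> exp u" by (rule exp_ge_add_one_self)
  hence key: "u * exp (- u) \<le> 1 - exp (- u)"
    by (simp add: exp_minus field_simps)
  have pos: "0 < 1 - exp (- u)" using u by simp
  have "rad (Suc j) / (rad (Suc j) - rad j) = 1 / (1 - exp (- u))"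
    unfolding R r using pos by (simp add: field_simps)
  also have "\<dots> \<le> 1 / (u * exp (- u))"
    using key u by (intro divide_left_mono mult_pos_pos) auto
  also have "\<dots> = exp u / u" by (simp add: exp_minus field_simps)
  also have "\<dots> \<le> exp pi / u" using u by (intro divide_right_mono) auto
  also have "\<dots> = exp pi * 2 ^ j / pi" unfolding u_def by simp
  also have "\<dots> \<le> exp pi * 2 ^ j" using pi_ge_two by (simp add: field_simps)
  finally show ?thesis .
qed

lemma tdist_nonneg: "0 \<le> tdist x y"
  unfolding tdist_def by simp

lemma tdist_le_half: "tdist x y \<le> 1/2"
  unfolding tdist_def using of_int_round_ge[of "x - y"] of_int_round_le[of "x - y"] by linarith

lemma powr_norm_dil_le_circle_mean:
  fixes f :: "complex \<Rightarrow> 'a::complex_banach"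
  assumes "analytic_disc f" and "\<delta> > 0"
  shows "norm (dil f j (zeta y)) powr \<delta> \<le> exp pi * 2 ^ j * circle_mean f (rad (Suc j)) \<delta>"
proof -
  have "circle_mean f (rad (Suc j)) \<delta> \<ge> 0"
    unfolding circle_mean_def
    by (intro integral_nonneg integrable_continuous_real continuous_on_powr_norm_circle_param
          continuous_on_subset[OF continuous_on_analytic_disc[OF assms(1)]] assms(2))
       (use rad_gt_0[of "Suc j"] rad_less_1[of "Suc j"] in auto)
  moreover have "norm (dil f j (zeta y)) powr \<delta>
      \<le> rad (Suc j) / (rad (Suc j) - rad j) * circle_mean f (rad (Suc j)) \<delta>"
  proof -
    define z where "z = of_real (rad j) * zeta y"
    have "norm z = rad j" using rad_gt_0[of j] by (simp add: z_def norm_mult)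
    moreover have "norm (f z) powr \<delta> \<le> rad (Suc j) / (rad (Suc j) - norm z) * circle_mean f (rad (Suc j)) \<delta>"
      by (rule powr_norm_le_circle_mean_analytic_disc[OF assms(1) rad_gt_0 rad_less_1 _ assms(2)])
         (simp add: \<open>norm z = rad j\<close> rad_less_rad_Suc)
    ultimately show ?thesis by (simp add: z_def dil_def)
  qed
  ultimately show ?thesis
    using rad_Suc_div_diff_le[of j] order_trans mult_right_mono by blast
qed

lemma set_nn_integral_Icc_continuous:
  fixes F :: "real \<Rightarrow> real"
  assumes "continuous_on {a..b} F" and "\<And>y. 0 \<le> F y"
  shows "set_nn_integral lborel {a..b} (\<lambda>y. ennreal (F y)) = ennreal (integral {a..b} F)"
proof -
  have "(F has_integral integral {a..b} F) {a..b}"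
    using integrable_continuous_real[OF assms(1)] by (rule integrable_integral)
  hence "(\<integral>\<^sup>+ y. ennreal (indicator {a..b} y * F y) \<partial>lborel) = ennreal (integral {a..b} F)"
    by (rule nn_integral_has_integral_lebesgue[OF assms(2)])
  moreover have "(\<lambda>y. ennreal (F y) * indicator {a..b} y) = (\<lambda>y. ennreal (indicator {a..b} y * F y))"
    by (auto simp: indicator_def)
  ultimately show ?thesis by simp
qed

lemma circle_mean_le_weighted_integral:
  fixes f :: "complex \<Rightarrow> 'a::complex_banach"
  assumes "analytic_disc f" and "\<delta> > 0" and "0 \<le> L" and "0 \<le> b"
  shows "ennreal (circle_mean f (rad j) \<delta> / (1 + L) powr b)
    \<le> set_nn_integral lborel {0..1}
         (\<lambda>y. ennreal (norm (dil f j (zeta y)) powr \<delta> / (1 + L * tdist x y) powr b))"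
proof -
  define F where "F y = norm (dil f j (zeta y)) powr \<delta> / (1 + L) powr b" for y
  have "continuous_on {0..1} (\<lambda>y. norm (f (of_real (rad j) * zeta y)) powr \<delta>)"
    by (intro continuous_on_powr_norm_circle_param
          continuous_on_subset[OF continuous_on_analytic_disc[OF assms(1)]] assms(2))
       (use rad_gt_0[of j] rad_less_1[of j] in auto)
  hence "set_nn_integral lborel {0..1} (\<lambda>y. ennreal (F y)) = ennreal (integral {0..1} F)"
    unfolding F_def dil_def using assms(3)
    by (intro set_nn_integral_Icc_continuous continuous_on_divide[OF _ continuous_on_const]) auto
  also have "integral {0..1} F = circle_mean f (rad j) \<delta> / (1 + L) powr b"
    unfolding F_def circle_mean_def dil_def by (simp add: integral_divide)
  finally have "ennreal (circle_mean f (rad j) \<delta> / (1 + L) powr b)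
      = set_nn_integral lborel {0..1} (\<lambda>y. ennreal (F y))" ..
  also have "\<dots> \<le> set_nn_integral lborel {0..1}
         (\<lambda>y. ennreal (norm (dil f j (zeta y)) powr \<delta> / (1 + L * tdist x y) powr b))"
  proof (intro nn_integral_mono mult_right_mono ennreal_leI)
    fix y
    have "1 \<le> (1 + L * tdist x y) powr b" "(1 + L * tdist x y) powr b \<le> (1 + L) powr b"
      using assms(3,4) tdist_nonneg[of x y] tdist_le_half[of x y]
      by (auto intro!: ge_one_powr_ge_zero powr_mono2 mult_left_le)
    thus "F y \<le> norm (dil f j (zeta y)) powr \<delta> / (1 + L * tdist x y) powr b"
      unfolding F_def by (intro divide_left_mono mult_pos_pos) auto
  qed simp
  finally show ?thesis .
qed

lemma dyadic_weight_bound: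
  fixes M u S \<delta> :: real
  assumes "\<delta> > 0" and "0 \<le> u" and "0 \<le> S"
    and mean: "2 powr (- (real (Suc k) * real N * \<delta>)) * 2 ^ (Suc k + l) * M \<le> S"
    and point: "u powr \<delta> \<le> exp pi * 2 ^ (l + k) * M"
  shows "2 powr (- (real k * real N)) * u \<le> (exp pi * S) powr (1 / \<delta>) * 2 powr real N"
proof -
  define P where "P = 2 powr (real (Suc k) * real N * \<delta>)"
  have "P > 0" by (simp add: P_def)
  have "2 powr (- (real (Suc k) * real N * \<delta>)) * 2 ^ (Suc k + l) = 2 * 2 ^ (l + k) / P"
    unfolding P_def by (simp add: powr_minus_divide algebra_simps del: of_nat_Suc)
  hence "2 ^ (l + k) * M \<le> S * P / 2"
    using mean \<open>P > 0\<close> by (simp only:) (simp add: field_simps)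
  have "u powr \<delta> \<le> exp pi * (2 ^ (l + k) * M)" using point by (simp add: mult.assoc)
  also have "\<dots> \<le> exp pi * (S * P / 2)" using \<open>2 ^ (l + k) * M \<le> S * P / 2\<close> by simp
  also have "\<dots> \<le> exp pi * S * P" using \<open>P > 0\<close> \<open>0 \<le> S\<close> by simp
  finally have "u powr \<delta> \<le> exp pi * S * P" .
  hence "(u powr \<delta>) powr (1 / \<delta>) \<le> (exp pi * S * P) powr (1 / \<delta>)"
    using \<open>\<delta> > 0\<close> by (intro powr_mono2) auto
  hence "u \<le> (exp pi * S) powr (1 / \<delta>) * 2 powr (real (Suc k) * real N)"
    using assms(1-3) unfolding P_def by (simp add: powr_powr powr_mult)
  hence "2 powr (- (real k * real N)) * u
      \<le> 2 powr (- (real k * real N)) * ((exp pi * S) powr (1 / \<delta>) * 2 powr (real (Suc k) * real N))"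
    by (rule mult_left_mono) simp
  thus ?thesis by (simp add: powr_add[symmetric] algebra_simps)
qed

lemma weighted_circle_means_bounded:
  fixes f :: "complex \<Rightarrow> 'a::complex_banach" and c :: "nat \<Rightarrow> real" and j :: "nat \<Rightarrow> nat"
  assumes "analytic_disc f" and "\<delta> > 0" and "0 \<le> L" and "0 \<le> b" and "\<And>m. 0 \<le> c m"
    and "(\<Sum>m. ennreal (c m) * set_nn_integral lborel {0..1}
           (\<lambda>y. ennreal (norm (dil f (j m) (zeta y)) powr \<delta> / (1 + L * tdist x y) powr b))) < \<infinity>"
  obtains S where "0 \<le> S" "\<And>m. c m * circle_mean f (rad (j m)) \<delta> \<le> S"
proof -
  let ?T = "\<lambda>m. ennreal (c m) * set_nn_integral lborel {0..1}
           (\<lambda>y. ennreal (norm (dil f (j m) (zeta y)) powr \<delta> / (1 + L * tdist x y) powr b))"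
  let ?D = "(1 + L) powr b"
  obtain s where "0 \<le> s" and sum: "(\<Sum>m. ?T m) = ennreal s"
    using assms(6) by (auto simp: less_top_ennreal)
  have "1 \<le> ?D" using assms(3,4) by (intro ge_one_powr_ge_zero) simp_all
  have "0 \<le> s * ?D" using \<open>0 \<le> s\<close> by simp
  moreover have "c m * circle_mean f (rad (j m)) \<delta> \<le> s * ?D" for m
  proof -
    have "ennreal (c m) * ennreal (circle_mean f (rad (j m)) \<delta> / ?D) \<le> ?T m"
      by (intro mult_left_mono circle_mean_le_weighted_integral assms(1-4)) simp
    also have "?T m \<le> ennreal s"
      using sum_le_suminf[OF summableI, of "{m}" ?T] sum by simp
    finally have "c m * (circle_mean f (rad (j m)) \<delta> / ?D) \<le> s"
      using \<open>0 \<le> s\<close> assms(5) by (simp add: ennreal_mult'[symmetric])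
    moreover have "0 < ?D" using \<open>1 \<le> ?D\<close> by linarith
    ultimately show ?thesis by (simp add: pos_divide_le_eq)
  qed
  ultimately show thesis by (rule that)
qed

lemma weighted_norm_dil_le:
  fixes f :: "complex \<Rightarrow> 'a::complex_banach"
  assumes "analytic_disc f" and "\<delta> > 0" and "0 \<le> a" and "0 \<le> S"
    and "2 powr (- (real (Suc k) * real N * \<delta>)) * 2 ^ (Suc k + l) * circle_mean f (rad (Suc k + l)) \<delta> \<le> S"
  shows "2 powr (- (real k * real N)) * norm (dil f (l + k) (zeta y)) / (1 + 2 ^ l * tdist x y) powr a
    \<le> (exp pi * S) powr (1 / \<delta>) * 2 powr real N"
proof -
  have "1 \<le> (1 + 2 ^ l * tdist x y) powr a"
    using assms(3) tdist_nonneg[of x y] by (intro ge_one_powr_ge_zero) auto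
  hence "2 powr (- (real k * real N)) * norm (dil f (l + k) (zeta y)) / (1 + 2 ^ l * tdist x y) powr a
      \<le> 2 powr (- (real k * real N)) * norm (dil f (l + k) (zeta y))"
    using divide_left_mono[of 1 "(1 + 2 ^ l * tdist x y) powr a"
        "2 powr (- (real k * real N)) * norm (dil f (l + k) (zeta y))"] by fastforce
  also have "\<dots> \<le> (exp pi * S) powr (1 / \<delta>) * 2 powr real N"
    using assms(4,5)
    by (intro dyadic_weight_bound[OF assms(2) norm_ge_zero _ _ powr_norm_dil_le_circle_mean[OF assms(1,2)]])
       (simp_all add: add.commute)
  finally show ?thesis .
qed

theorem lemma17:
  fixes f :: "complex \<Rightarrow> 'a::complex_banach"
    and N :: nat and a \<delta> :: real and l :: nat and x :: real
  assumes "N \<ge> 1" and "a > 0" and "\<delta> > 0"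
    and "analytic_disc f"
    and "(\<Sum>m. ennreal (2 powr (- (real (Suc m) * real N * \<delta>)) * 2 ^ (Suc m + l)) *
           set_nn_integral lborel {0..1}
             (\<lambda>y. ennreal (norm (dil f (Suc m + l) (zeta y)) powr \<delta> /
                             (1 + 2 ^ l * tdist x y) powr (a * \<delta>)))) < \<infinity>"
  shows "(SUP k::nat. SUP y::real.
            ennreal (2 powr (- (real k * real N)) * norm (dil f (l + k) (zeta y)) /
                     (1 + 2 ^ l * tdist x y) powr a)) < \<infinity>"
proof -
  obtain S where "0 \<le> S" and means:
    "\<And>k. 2 powr (- (real (Suc k) * real N * \<delta>)) * 2 ^ (Suc k + l) * circle_mean f (rad (Suc k + l)) \<delta> \<le> S"
    by (rule weighted_circle_means_bounded[OF assms(4,3) _ _ _ assms(5)]) (use assms(2,3) in simp_all)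
  have "(SUP k::nat. SUP y::real.
            ennreal (2 powr (- (real k * real N)) * norm (dil f (l + k) (zeta y)) /
                     (1 + 2 ^ l * tdist x y) powr a)) \<le> ennreal ((exp pi * S) powr (1 / \<delta>) * 2 powr real N)"
    using assms(2) by (intro SUP_least ennreal_leI weighted_norm_dil_le[OF assms(4,3) _ \<open>0 \<le> S\<close> means]) simp
  thus ?thesis using order_le_less_trans by fastforce
qed

end
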